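(* Let $R$ be an abelian Rickart $*$-ring and $a,b\in R$. Then $a\perp b$ if and only if $RP(a)RP(b)=0$.
   Context: A Rickart $*$-ring is a $*$-ring in which the right annihilator of every element is generated by a projection ($e=e^2=e^*$); it has unity. For $a\in R$, $RP(a)$ is the unique projection $e$ with $ae=a$ and such that $ax=0\iff ex=0$; equivalently $\{x:ax=0\}=(1-RP(a))R$. Abelian: all idempotents central. Orthogonality: $a\perp b$ iff there is $x\in R$ with $xa=a=ax^*$ and $xb=0=bx^*$. *)

theory Defs
  imports Main
begin

definition star_ring :: "('a::ring_1 \<Rightarrow> 'a) \<Rightarrow> bool" where
  "star_ring star \<longleftrightarrow>
     (\<forall>a b. star (a + b) = star a + star b) \<and>
     (\<forall>a b. star (a * b) = star b * star a) \<and>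
     (\<forall>a. star (star a) = a)"

definition projection :: "('a::ring_1 \<Rightarrow> 'a) \<Rightarrow> 'a \<Rightarrow> bool" where
  "projection star e \<longleftrightarrow> e * e = e \<and> star e = e"

definition rickart_star_ring :: "('a::ring_1 \<Rightarrow> 'a) \<Rightarrow> bool" where
  "rickart_star_ring star \<longleftrightarrow> star_ring star \<and>
     (\<forall>a::'a. \<exists>e. projection star e \<and> {x. a * x = 0} = {e * y | y. True})"

definition abelian_ring :: "'a::ring_1 itself \<Rightarrow> bool" where
  "abelian_ring _ \<longleftrightarrow> (\<forall>e::'a. e * e = e \<longrightarrow> (\<forall>x. e * x = x * e))"

definition RP :: "('a::ring_1 \<Rightarrow> 'a) \<Rightarrow> 'a \<Rightarrow> 'a" where
  "RP star a = (THE e. projection star e \<and> a * e = a \<and> (\<forall>x. a * x = 0 \<longleftrightarrow> e * x = 0))"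

definition orth :: "('a::ring_1 \<Rightarrow> 'a) \<Rightarrow> 'a \<Rightarrow> 'a \<Rightarrow> bool" where
  "orth star a b \<longleftrightarrow> (\<exists>x. x * a = a \<and> a = a * star x \<and> x * b = 0 \<and> b * star x = 0)"

end

theory Submission
  imports Defs
begin

text \<open>In an abelian Rickart star-ring the projections RP(a), RP(b) are central. If x witnesses
  a \<perp> b, then RP(a) = RP(a) x* (since a(1 - x*) = 0) while RP(b) x* = 0 (since b x* = 0),
  so RP(a) RP(b) = RP(b) RP(a) x* = 0 by centrality. Conversely, if RP(a) RP(b) = 0 then
  x = RP(a) itself witnesses a \<perp> b.\<close>

definition right_projection :: "('a::ring_1 \<Rightarrow> 'a) \<Rightarrow> 'a \<Rightarrow> 'a \<Rightarrow> bool" where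
  "right_projection star a e \<longleftrightarrow>
     projection star e \<and> a * e = a \<and> (\<forall>x. a * x = 0 \<longleftrightarrow> e * x = 0)"

lemma star_ring_star_one:
  assumes "star_ring star"
  shows "star (1::'a::ring_1) = 1"
proof -
  have "star (star 1 * 1) = star 1 * star (star (1::'a))"
    using assms unfolding star_ring_def by blast
  then show ?thesis using assms unfolding star_ring_def by simp
qed

lemma star_ring_star_diff:
  assumes "star_ring star"
  shows "star ((x::'a::ring_1) - y) = star x - star y"
proof -
  have "star ((x - y) + y) = star (x - y) + star y"
    using assms unfolding star_ring_def by blast
  then show ?thesis by (simp add: algebra_simps)
qed

lemma right_projection_unique:
  fixes star :: "'a::ring_1 \<Rightarrow> 'a"
  assumes S: "star_ring star"
    and p: "right_projection star a p" and q: "right_projection star a q"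
  shows "q = p"
proof -
  have "a * (1 - p) = 0" using p by (simp add: right_projection_def algebra_simps)
  then have "q * (1 - p) = 0" using q unfolding right_projection_def by blast
  then have qp: "q * p = q" by (simp add: algebra_simps)
  have "a * (1 - q) = 0" using q by (simp add: right_projection_def algebra_simps)
  then have "p * (1 - q) = 0" using p unfolding right_projection_def by blast
  then have pq: "p * q = p" by (simp add: algebra_simps)
  have "q = star (q * p)" using q qp by (simp add: right_projection_def projection_def)
  also have "\<dots> = star p * star q" using S unfolding star_ring_def by blast
  also have "\<dots> = p * q" using p q by (simp add: right_projection_def projection_def)
  finally show ?thesis using pq by simp
qed

text \<open>If e generates the right annihilator of a, then 1 - e is the right projection of a.\<close>
lemma rickart_right_projection_exists:
  fixes star :: "'a::ring_1 \<Rightarrow> 'a"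
  assumes R: "rickart_star_ring star"
  shows "\<exists>p. right_projection star a p"
proof -
  have S: "star_ring star" using R unfolding rickart_star_ring_def by blast
  obtain e where e: "projection star e" and ann: "{x. a * x = 0} = {e * y | y. True}"
    using R unfolding rickart_star_ring_def by blast
  have ee: "e * e = e" "star e = e" using e unfolding projection_def by auto
  have "e \<in> {e * y | y. True}" by (rule CollectI, rule exI[of _ 1]) simp
  then have ae: "a * e = 0" using ann by blast
  have "right_projection star a (1 - e)"
    unfolding right_projection_def
  proof (intro conjI allI)
    show "projection star (1 - e)" unfolding projection_def
      using ee star_ring_star_diff[OF S, of 1 e] star_ring_star_one[OF S]
      by (simp add: algebra_simps)
    show "a * (1 - e) = a" using ae by (simp add: algebra_simps)
    fix x
    have "a * x = 0 \<longleftrightarrow> (\<exists>y. x = e * y)" using ann by blast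
    also have "\<dots> \<longleftrightarrow> x = e * x"
    proof
      assume "\<exists>y. x = e * y"
      then obtain y where "x = e * y" ..
      then show "x = e * x" using ee(1) by (simp flip: mult.assoc)
    qed blast
    also have "\<dots> \<longleftrightarrow> (1 - e) * x = 0" by (simp add: algebra_simps)
    finally show "a * x = 0 \<longleftrightarrow> (1 - e) * x = 0" .
  qed
  then show ?thesis ..
qed

lemma RP_right_projection:
  fixes star :: "'a::ring_1 \<Rightarrow> 'a"
  assumes R: "rickart_star_ring star"
  shows "right_projection star a (RP star a)"
proof -
  have S: "star_ring star" using R unfolding rickart_star_ring_def by blast
  obtain p where p: "right_projection star a p"
    using rickart_right_projection_exists[OF R] by blast
  have "RP star a = p"
    unfolding RP_def right_projection_def[symmetric]
    using p right_projection_unique[OF S p] by blast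
  then show ?thesis using p by simp
qed

lemma abelian_ring_idempotent_central:
  assumes "abelian_ring TYPE('a::ring_1)" and "(e::'a) * e = e"
  shows "e * x = x * e"
  using assms unfolding abelian_ring_def by blast

lemma orth_imp_RP_mult_eq_zero:
  fixes star :: "'a::ring_1 \<Rightarrow> 'a"
  assumes R: "rickart_star_ring star" and A: "abelian_ring TYPE('a)"
    and "orth star a b"
  shows "RP star a * RP star b = 0"
proof -
  define p q where "p = RP star a" and "q = RP star b"
  have p: "right_projection star a p" and q: "right_projection star b q"
    using RP_right_projection[OF R] unfolding p_def q_def by blast+
  have central: "p * y = y * p" for y
    using abelian_ring_idempotent_central[OF A] p
    unfolding right_projection_def projection_def by blast
  obtain x where ax: "a = a * star x" and bx: "b * star x = 0"
    using assms(3) unfolding orth_def by blast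
  have qx: "q * star x = 0" using bx q unfolding right_projection_def by blast
  have "a * (1 - star x) = 0" using ax by (simp add: algebra_simps)
  then have "p * (1 - star x) = 0" using p unfolding right_projection_def by blast
  then have px: "p = p * star x" by (simp add: algebra_simps)
  have "p * q = q * p" by (rule central)
  also have "\<dots> = q * (p * star x)" using px by simp
  also have "\<dots> = (q * p) * star x" by (simp only: mult.assoc)
  also have "\<dots> = p * (q * star x)" by (simp only: central[of q] flip: mult.assoc)
  finally show ?thesis using qx unfolding p_def q_def by simp
qed

lemma RP_mult_eq_zero_imp_orth:
  fixes star :: "'a::ring_1 \<Rightarrow> 'a"
  assumes R: "rickart_star_ring star" and A: "abelian_ring TYPE('a)"
    and pq: "RP star a * RP star b = 0"
  shows "orth star a b"
proof -
  define p q where "p = RP star a" and "q = RP star b"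
  have p: "p * p = p" "star p = p" "a * p = a"
    using RP_right_projection[OF R, of a]
    unfolding p_def right_projection_def projection_def by auto
  have bq: "b * q = b"
    using RP_right_projection[OF R, of b] unfolding q_def right_projection_def by blast
  have central: "p * y = y * p" for y
    using abelian_ring_idempotent_central[OF A p(1)] .
  have bp: "b * p = 0"
  proof -
    have "b * p = b * (q * p)" using bq by (simp flip: mult.assoc)
    then have "b * p = b * (p * q)" by (simp only: central[of q])
    then show ?thesis using pq unfolding p_def q_def by simp
  qed
  have "p * a = a \<and> a = a * star p \<and> p * b = 0 \<and> b * star p = 0"
    using p bp central[of a] central[of b] by simp
  then show ?thesis unfolding orth_def by blast
qed

theorem mainTheorem13:
  fixes star :: "'a::ring_1 \<Rightarrow> 'a" and a b :: 'a
  assumes "rickart_star_ring star"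
    and "abelian_ring TYPE('a)"
  shows "orth star a b \<longleftrightarrow> RP star a * RP star b = 0"
  using orth_imp_RP_mult_eq_zero[OF assms] RP_mult_eq_zero_imp_orth[OF assms] by blast

end
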